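(* Let $V_1$ and $V_2$ be real vector spaces of dimensions $d_1,d_2\geq 1$, let $U\subseteq V_1$ and $V\subseteq V_2$ be relatively compact, open, balanced subsets, let $R_1,R_2>0$ and $0<\varepsilon<R_1^{d_1}R_2^{d_2}$, and define $$U\times_{R_1,R_2,\varepsilon}V:=\{(\alpha u,\beta v)\,;\,u\in U,\ v\in V,\ \alpha,\beta\in\mathbb{R},\ |\alpha|\leq R_1,\ |\beta|\leq R_2,\ |\alpha^{d_1}\beta^{d_2}|\leq\varepsilon\}\subseteq V_1\times V_2.$$ Then $$\Lambda(U\times_{R_1,R_2,\varepsilon}V)=\varepsilon\Big(1+\log\Big(\frac{R_1^{d_1}R_2^{d_2}}{\varepsilon}\Big)\Big)\Lambda(U)\Lambda(V),$$ where $\Lambda$ denotes Lebesgue measure on $V_1$, $V_2$, and the product Lebesgue measure on $V_1\times V_2$.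
   Context: A subset $U$ of a real vector space is balanced if $\alpha U\subseteq U$ for all real $\alpha$ with $|\alpha|\leq 1$. *)

theory Defs
  imports "HOL-Analysis.Analysis"
begin

definition balanced :: "'a::real_vector set \<Rightarrow> bool" where
  "balanced U \<longleftrightarrow> (\<forall>\<alpha>::real. \<bar>\<alpha>\<bar> \<le> 1 \<longrightarrow> (\<lambda>x. \<alpha> *\<^sub>R x) ` U \<subseteq> U)"

definition twisted_prod ::
  "'a::euclidean_space set \<Rightarrow> real \<Rightarrow> real \<Rightarrow> real \<Rightarrow> 'b::euclidean_space set \<Rightarrow> ('a \<times> 'b) set" where
  "twisted_prod U R1 R2 \<epsilon> V =
     {(\<alpha> *\<^sub>R u, \<beta> *\<^sub>R v) | u v \<alpha> \<beta>. u \<in> U \<and> v \<in> V \<and> \<bar>\<alpha>\<bar> \<le> R1 \<and> \<bar>\<beta>\<bar> \<le> R2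
        \<and> \<bar>\<alpha> ^ DIM('a) * \<beta> ^ DIM('b)\<bar> \<le> \<epsilon>}"

end

theory Submission
  imports Defs
begin

(* The d-th power of the Minkowski gauge p_U of an open balanced set U is uniformly distributed:
   its sublevel set {p_U^d < s} is the dilate s^(1/d) U, of measure s \<Lambda>(U), so p_U^d pushes
   Lebesgue measure forward to \<Lambda>(U) times Lebesgue measure on (0, \<infinity>). The twisted product
   is the set where (p_U^d1, p_V^d2) lies in the region {s < A, t < B, s t < \<epsilon>} with A = R1^d1,
   B = R2^d2, so by Tonelli its measure is \<Lambda>(U) \<Lambda>(V) times the area of that region, namely
   \<epsilon> + \<integral> from \<epsilon>/B to A of \<epsilon>/s ds = \<epsilon> (1 + ln (A B / \<epsilon>)). *)

lemma power_less_power_iff: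
  fixes a b :: "'a::linordered_semidom"
  assumes "0 \<le> a" "0 \<le> b" "0 < n"
  shows "a ^ n < b ^ n \<longleftrightarrow> a < b"
  using assms power_strict_mono[of a b n] power_less_imp_less_base[of a n b] by auto

lemma emeasure_lborel_scaleR_image:
  fixes S :: "'a::euclidean_space set"
  assumes "S \<in> sets borel" "c \<noteq> 0"
  shows "emeasure lborel ((*\<^sub>R) c ` S) = ennreal (\<bar>c\<bar> ^ DIM('a)) * emeasure lborel S"
proof -
  have "(*\<^sub>R) c ` S = (*\<^sub>R) (1 / c) -` S"
    using assms(2) by (force intro: rev_image_eqI[of "(1 / c) *\<^sub>R x" for x])
  moreover have "(\<lambda>x::'a. (1 / c) *\<^sub>R x) \<in> borel_measurable borel" by measurable
  ultimately have "(*\<^sub>R) c ` S \<in> sets borel"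
    using assms(1) measurable_sets_borel by metis
  then show ?thesis
    using emeasure_lebesgue_affine[of c 0 S] assms(1) by simp
qed

lemma balanced_scaleR_mem:
  assumes "balanced U" "u \<in> U" "\<bar>c\<bar> \<le> 1"
  shows "c *\<^sub>R u \<in> U"
  using assms unfolding balanced_def by blast

definition minkowski_gauge :: "'a::real_vector set \<Rightarrow> 'a \<Rightarrow> real" where
  "minkowski_gauge U x = Inf {a. 0 < a \<and> x \<in> (*\<^sub>R) a ` U}"

lemma open_balanced_absorbing:
  fixes U :: "'a::real_normed_vector set"
  assumes "open U" "balanced U" "U \<noteq> {}"
  shows "\<exists>a>0. x \<in> (*\<^sub>R) a ` U"
proof -
  obtain u where "u \<in> U" using assms(3) by blast
  then have "0 \<in> U" using balanced_scaleR_mem[OF assms(2), of u 0] by simp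
  then obtain e where e: "0 < e" "ball 0 e \<subseteq> U" using assms(1) open_contains_ball by blast
  define t where "t = e / (norm x + 1)"
  have t: "0 < t" using e by (simp add: t_def add_nonneg_pos)
  have "norm (t *\<^sub>R x) = e * (norm x / (norm x + 1))" using e by (simp add: t_def)
  also have "\<dots> < e * 1" using e by (intro mult_strict_left_mono) (auto simp: divide_less_eq add_nonneg_pos)
  finally have "norm (t *\<^sub>R x) < e" by simp
  then have "t *\<^sub>R x \<in> U" using e by auto
  then have "x \<in> (*\<^sub>R) (1 / t) ` U" using t by (intro rev_image_eqI) auto
  then show ?thesis using t by (intro exI[of _ "1 / t"]) auto
qed

lemma minkowski_gauge_nonneg:
  fixes U :: "'a::real_normed_vector set"
  assumes "open U" "balanced U" "U \<noteq> {}"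
  shows "0 \<le> minkowski_gauge U x"
  unfolding minkowski_gauge_def
  by (rule cInf_greatest) (use open_balanced_absorbing[OF assms, of x] in auto)

lemma minkowski_gauge_less_iff:
  fixes U :: "'a::real_normed_vector set"
  assumes "open U" "balanced U" "U \<noteq> {}" "0 < a"
  shows "minkowski_gauge U x < a \<longleftrightarrow> x \<in> (*\<^sub>R) a ` U"
proof -
  let ?S = "{a. 0 < a \<and> x \<in> (*\<^sub>R) a ` U}"
  have ne: "?S \<noteq> {}" using open_balanced_absorbing[OF assms(1-3), of x] by auto
  have bdd: "bdd_below ?S" by (rule bdd_belowI[of _ 0]) auto
  show ?thesis
  proof
    assume "minkowski_gauge U x < a"
    then obtain b u where b: "0 < b" "b < a" and u: "u \<in> U" "x = b *\<^sub>R u"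
      unfolding minkowski_gauge_def cInf_less_iff[OF ne bdd] by blast
    have "(b / a) *\<^sub>R u \<in> U" using b assms(4) by (intro balanced_scaleR_mem[OF assms(2) u(1)]) auto
    moreover have "x = a *\<^sub>R ((b / a) *\<^sub>R u)" using u assms(4) by simp
    ultimately show "x \<in> (*\<^sub>R) a ` U" by blast
  next
    assume "x \<in> (*\<^sub>R) a ` U"
    then obtain u where u: "u \<in> U" "x = a *\<^sub>R u" by auto
    \<comment> \<open>Openness lets us push \<open>u\<close> slightly outwards, to some \<open>t *\<^sub>R u \<in> U\<close> with \<open>t > 1\<close>.\<close>
    have "open ((\<lambda>t. t *\<^sub>R u) -` U)" by (intro open_vimage assms(1) continuous_intros)
    moreover have "1 \<in> (\<lambda>t. t *\<^sub>R u) -` U" using u by simp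
    ultimately obtain e where e: "0 < e" "ball 1 e \<subseteq> (\<lambda>t. t *\<^sub>R u) -` U"
      using open_contains_ball by blast
    define t where "t = 1 + e / 2"
    have "t \<in> ball 1 e" using e by (simp add: t_def dist_real_def)
    then have t: "1 < t" "t *\<^sub>R u \<in> U" using e by (auto simp: t_def)
    have "x \<in> (*\<^sub>R) (a / t) ` U" using u t by (intro rev_image_eqI[OF t(2)]) simp
    then have "a / t \<in> ?S" using t assms(4) by simp
    then have "minkowski_gauge U x \<le> a / t" unfolding minkowski_gauge_def by (rule cInf_lower[OF _ bdd])
    also have "a / t < a" using t assms(4) by (simp add: divide_less_eq)
    finally show "minkowski_gauge U x < a" .
  qed
qed

lemma minkowski_gauge_scaleR_less:
  fixes U :: "'a::real_normed_vector set"
  assumes "open U" "balanced U" "u \<in> U" "\<bar>\<alpha>\<bar> \<le> a" "0 < a"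
  shows "minkowski_gauge U (\<alpha> *\<^sub>R u) < a"
proof -
  have "(\<alpha> / a) *\<^sub>R u \<in> U" using assms by (intro balanced_scaleR_mem) auto
  moreover have "\<alpha> *\<^sub>R u = a *\<^sub>R ((\<alpha> / a) *\<^sub>R u)" using assms(5) by simp
  ultimately show ?thesis using minkowski_gauge_less_iff assms by blast
qed

lemma minkowski_gauge_zero:
  fixes U :: "'a::real_normed_vector set"
  assumes "open U" "balanced U" "U \<noteq> {}"
  shows "minkowski_gauge U 0 = 0"
proof -
  obtain u where "u \<in> U" using assms(3) by blast
  then have "minkowski_gauge U 0 < a" if "0 < a" for a
    using minkowski_gauge_scaleR_less[OF assms(1,2), of u 0 a] that by simp
  then show ?thesis using minkowski_gauge_nonneg[OF assms, of 0] by (metis less_irrefl le_less)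
qed

lemma borel_measurable_minkowski_gauge:
  fixes U :: "'a::euclidean_space set"
  assumes "open U" "balanced U" "U \<noteq> {}"
  shows "minkowski_gauge U \<in> borel_measurable borel"
proof (rule borel_measurableI_less)
  fix a :: real
  show "{x \<in> space borel. minkowski_gauge U x < a} \<in> sets borel"
  proof (cases "0 < a")
    case True
    then have "{x \<in> space borel. minkowski_gauge U x < a} = (*\<^sub>R) a ` U"
      using minkowski_gauge_less_iff[OF assms True] by auto
    then show ?thesis using True open_scaling[OF _ assms(1)] by auto
  next
    case False
    then have "{x \<in> space borel. minkowski_gauge U x < a} = {}"
      using minkowski_gauge_nonneg[OF assms] by (auto simp: not_less intro: order.trans)
    then show ?thesis by simp
  qed
qed

lemma emeasure_minkowski_gauge_pow_less:
  fixes U :: "'a::euclidean_space set"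
  assumes "open U" "balanced U" "U \<noteq> {}" "0 < s"
  shows "emeasure lborel {x. minkowski_gauge U x ^ DIM('a) < s} = ennreal s * emeasure lborel U"
proof -
  let ?r = "root DIM('a) s"
  have r: "0 < ?r" using assms(4) by simp
  have "minkowski_gauge U x ^ DIM('a) < ?r ^ DIM('a) \<longleftrightarrow> minkowski_gauge U x < ?r" for x
    using minkowski_gauge_nonneg[OF assms(1-3)] r by (intro power_less_power_iff) auto
  then have "{x. minkowski_gauge U x ^ DIM('a) < s} = (*\<^sub>R) ?r ` U"
    using minkowski_gauge_less_iff[OF assms(1-3) r] assms(4) by (auto simp: real_root_pow_pos2)
  then show ?thesis
    using emeasure_lborel_scaleR_image[of U ?r] assms r by (simp add: real_root_pow_pos2)
qed

(* Unlike measure_eqI_lessThan, which compares the measures of the rays {x<..}, this only needs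
   finiteness on the rays {..<x}, as for Lebesgue measure restricted to (0, \<infinity>). *)
lemma measure_eqI_Iio:
  fixes M N :: "real measure"
  assumes sets: "sets M = sets borel" "sets N = sets borel"
    and fin: "\<And>x. emeasure M {..<x} < \<infinity>"
    and eq: "\<And>x. emeasure M {..<x} = emeasure N {..<x}"
  shows "M = N"
proof (rule measure_eqI_generator_eq_countable)
  let ?LT = "\<lambda>a::real. {..<a}" let ?E = "range ?LT"
  show "Int_stable ?E"
    by (auto simp: Int_stable_def greaterThan_Int_greaterThan)
  show "?E \<subseteq> Pow UNIV" "sets M = sigma_sets UNIV ?E" "sets N = sigma_sets UNIV ?E"
    unfolding sets borel_Iio by auto
  show "(\<Union>i\<in>\<rat>. ?LT i) = UNIV"
    by (auto, meson Rats_dense_in_real less_add_one)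
  show "?LT ` \<rat> \<subseteq> ?E" "\<And>a. a \<in> ?LT ` \<rat> \<Longrightarrow> emeasure M a \<noteq> \<infinity>"
    using fin by (auto simp: less_top)
qed (auto intro: eq countable_rat)

lemma distr_eq_density_of_linear_sublevels:
  fixes q :: "'a \<Rightarrow> real" and c :: ennreal
  assumes [measurable]: "q \<in> borel_measurable M" and q_nonneg: "\<And>x. x \<in> space M \<Longrightarrow> 0 \<le> q x"
    and sublevel: "\<And>s. 0 < s \<Longrightarrow> emeasure M {x \<in> space M. q x < s} = ennreal s * c"
    and "c < \<infinity>"
  shows "distr M borel q = density lborel (\<lambda>s. c * indicator {0<..} s)"
proof (rule measure_eqI_Iio)
  have distr: "emeasure (distr M borel q) {..<s} = ennreal s * c" for s
  proof (cases "0 < s")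
    case True
    have "q -` {..<s} \<inter> space M = {x \<in> space M. q x < s}" by auto
    then show ?thesis using sublevel[OF True] by (simp add: emeasure_distr)
  next
    case False
    then have "q -` {..<s} \<inter> space M = {}" using q_nonneg by (force simp: not_less)
    then show ?thesis using False by (simp add: emeasure_distr ennreal_neg)
  qed
  have "emeasure (density lborel (\<lambda>s. c * indicator {0<..} s)) {..<s} =
      (\<integral>\<^sup>+t. c * indicator {0<..} t * indicator {..<s} t \<partial>lborel)" for s :: real
    by (rule emeasure_density) auto
  also have "\<dots> s = (\<integral>\<^sup>+t. c * indicator {0<..<s} t \<partial>lborel)" for s
    by (auto intro!: nn_integral_cong simp: indicator_def)
  also have "\<dots> s = ennreal s * c" for s
    by (cases "0 \<le> s") (auto simp: nn_integral_cmult_indicator ennreal_neg mult.commute)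
  finally show "emeasure (distr M borel q) {..<s} = emeasure (density lborel (\<lambda>s. c * indicator {0<..} s)) {..<s}" for s
    using distr by simp
  show "emeasure (distr M borel q) {..<s} < \<infinity>" for s
    using distr \<open>c < \<infinity>\<close> by (simp add: ennreal_mult_less_top)
qed simp_all

lemma nn_integral_comp_of_distr_eq_density:
  fixes q :: "'a \<Rightarrow> real"
  assumes "distr M borel q = density lborel (\<lambda>s. c * indicator {0<..} s)"
    and [measurable]: "q \<in> borel_measurable M" "f \<in> borel_measurable borel"
  shows "(\<integral>\<^sup>+x. f (q x) \<partial>M) = c * (\<integral>\<^sup>+s\<in>{0<..}. f s \<partial>lborel)"
proof -
  have "(\<integral>\<^sup>+x. f (q x) \<partial>M) = (\<integral>\<^sup>+s. f s \<partial>distr M borel q)"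
    by (simp add: nn_integral_distr)
  also have "\<dots> = (\<integral>\<^sup>+s. c * (f s * indicator {0<..} s) \<partial>lborel)"
    unfolding assms(1) by (simp add: nn_integral_density ac_simps)
  also have "\<dots> = c * (\<integral>\<^sup>+s\<in>{0<..}. f s \<partial>lborel)"
    by (simp add: nn_integral_cmult)
  finally show ?thesis .
qed

lemma emeasure_lborel_pair_vimage:
  fixes q1 :: "'a::euclidean_space \<Rightarrow> real" and q2 :: "'b::euclidean_space \<Rightarrow> real"
  assumes [measurable]: "q1 \<in> borel_measurable borel" "q2 \<in> borel_measurable borel"
    and q1_distr: "distr lborel borel q1 = density lborel (\<lambda>s. c1 * indicator {0<..} s)"
    and q2_distr: "distr lborel borel q2 = density lborel (\<lambda>t. c2 * indicator {0<..} t)"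
    and [measurable]: "W \<in> sets (borel \<Otimes>\<^sub>M borel)"
  shows "emeasure lborel {z. (q1 (fst z), q2 (snd z)) \<in> W} =
    c1 * c2 * (\<integral>\<^sup>+s\<in>{0<..}. (\<integral>\<^sup>+t\<in>{0<..}. indicator W (s, t) \<partial>lborel) \<partial>lborel)"
proof -
  let ?G = "\<lambda>s. \<integral>\<^sup>+t\<in>{0<..}. indicator W (s, t) \<partial>lborel"
  have [measurable]: "?G \<in> borel_measurable borel" by measurable
  have "{z \<in> space (lborel \<Otimes>\<^sub>M lborel). (q1 (fst z), q2 (snd z)) \<in> W} \<in> sets (lborel \<Otimes>\<^sub>M lborel)"
    by measurable
  then have "emeasure lborel {z. (q1 (fst z), q2 (snd z)) \<in> W} =
      (\<integral>\<^sup>+z. indicator W (q1 (fst z), q2 (snd z)) \<partial>(lborel \<Otimes>\<^sub>M lborel))"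
    by (simp add: lborel_prod[symmetric] space_pair_measure nn_integral_indicator[symmetric] indicator_def)
  also have "\<dots> = (\<integral>\<^sup>+x. (\<integral>\<^sup>+y. indicator W (q1 x, q2 y) \<partial>lborel) \<partial>lborel)"
    by (simp add: lborel.nn_integral_fst[symmetric])
  also have "\<dots> = (\<integral>\<^sup>+x. c2 * ?G (q1 x) \<partial>lborel)"
    by (intro nn_integral_cong) (simp add: nn_integral_comp_of_distr_eq_density[OF q2_distr, of "\<lambda>t. indicator W (q1 _, t)"])
  also have "\<dots> = c1 * (\<integral>\<^sup>+s\<in>{0<..}. c2 * ?G s \<partial>lborel)"
    by (simp add: nn_integral_comp_of_distr_eq_density[OF q1_distr, of "\<lambda>s. c2 * ?G s"])
  also have "\<dots> = c1 * c2 * (\<integral>\<^sup>+s\<in>{0<..}. ?G s \<partial>lborel)"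
    by (simp add: nn_integral_cmult mult.assoc)
  finally show ?thesis .
qed

definition hyperbolic_region :: "real \<Rightarrow> real \<Rightarrow> real \<Rightarrow> (real \<times> real) set" where
  "hyperbolic_region A B \<epsilon> = {(s, t). s < A \<and> t < B \<and> s * t < \<epsilon>}"

lemma hyperbolic_region_sets: "hyperbolic_region A B \<epsilon> \<in> sets (borel \<Otimes>\<^sub>M borel)"
proof -
  have "{z \<in> space (borel \<Otimes>\<^sub>M borel). fst z < A \<and> snd z < B \<and> fst z * snd z < \<epsilon>} \<in> sets (borel \<Otimes>\<^sub>M borel)"
    by measurable
  then show ?thesis by (simp add: hyperbolic_region_def space_pair_measure case_prod_beta')
qed

lemma nn_integral_min_const_inverse:
  fixes A B \<epsilon> :: real
  assumes "0 < B" "0 < \<epsilon>" "\<epsilon> < A * B"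
  shows "(\<integral>\<^sup>+s\<in>{0<..<A}. ennreal (min B (\<epsilon> / s)) \<partial>lborel) = ennreal (\<epsilon> * (1 + ln (A * B / \<epsilon>)))"
proof -
  define s0 where "s0 = \<epsilon> / B"
  have s0: "0 < s0" "s0 < A" "B * s0 = \<epsilon>"
    using assms by (auto simp: s0_def divide_less_eq mult.commute)
  then have "0 < A" by linarith
  have "ennreal (min B (\<epsilon> / s)) * indicator {0<..<A} s =
      ennreal B * indicator {0<..s0} s + ennreal (\<epsilon> / s) * indicator {s0<..<A} s" for s
  proof -
    have "min B (\<epsilon> / s) = (if s \<le> s0 then B else \<epsilon> / s)" if "0 < s"
      using that assms s0 by (auto simp: min_def field_simps s0_def)
    then show ?thesis using s0 by (auto simp: indicator_def)
  qed
  then have "(\<integral>\<^sup>+s\<in>{0<..<A}. ennreal (min B (\<epsilon> / s)) \<partial>lborel) =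
      (\<integral>\<^sup>+s. ennreal B * indicator {0<..s0} s \<partial>lborel) + (\<integral>\<^sup>+s. ennreal (\<epsilon> / s) * indicator {s0<..<A} s \<partial>lborel)"
    by (simp add: nn_integral_add)
  also have "(\<integral>\<^sup>+s. ennreal B * indicator {0<..s0} s \<partial>lborel) = ennreal \<epsilon>"
    using s0 assms by (simp add: nn_integral_cmult_indicator ennreal_mult[symmetric])
  also have "(\<integral>\<^sup>+s. ennreal (\<epsilon> / s) * indicator {s0<..<A} s \<partial>lborel) =
      (\<integral>\<^sup>+s. ennreal (\<epsilon> / s) * indicator {s0..A} s \<partial>lborel)"
  proof (rule nn_integral_cong_AE)
    have "AE s in lborel. s \<noteq> s0" "AE s in lborel. s \<noteq> A" by (rule AE_lborel_singleton)+
    then show "AE s in lborel. ennreal (\<epsilon> / s) * indicator {s0<..<A} s = ennreal (\<epsilon> / s) * indicator {s0..A} s"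
      by eventually_elim (auto simp: indicator_def)
  qed
  also have "\<dots> = ennreal (\<epsilon> * ln A - \<epsilon> * ln s0)"
  proof (rule nn_integral_FTC_Icc)
    fix s assume "s \<in> {s0..A}"
    then have "0 < s" using s0 by auto
    then show "((\<lambda>s. \<epsilon> * ln s) has_real_derivative \<epsilon> / s) (at s)" "0 \<le> \<epsilon> / s"
      using assms by (auto intro!: derivative_eq_intros simp: field_simps)
  qed (use s0 in auto)
  also have "ennreal \<epsilon> + ennreal (\<epsilon> * ln A - \<epsilon> * ln s0) = ennreal (\<epsilon> + (\<epsilon> * ln A - \<epsilon> * ln s0))"
    using s0 assms by (intro ennreal_plus[symmetric]) (auto simp: right_diff_distrib[symmetric])
  also have "\<epsilon> + (\<epsilon> * ln A - \<epsilon> * ln s0) = \<epsilon> * (1 + ln (A * B / \<epsilon>))"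
    using \<open>0 < A\<close> assms by (simp add: s0_def ln_div ln_mult algebra_simps)
  finally show ?thesis .
qed

lemma nn_integral_hyperbolic_region:
  fixes A B \<epsilon> :: real
  assumes "0 < B" "0 < \<epsilon>" "\<epsilon> < A * B"
  shows "(\<integral>\<^sup>+s\<in>{0<..}. (\<integral>\<^sup>+t\<in>{0<..}. indicator (hyperbolic_region A B \<epsilon>) (s, t) \<partial>lborel) \<partial>lborel)
    = ennreal (\<epsilon> * (1 + ln (A * B / \<epsilon>)))"
proof -
  let ?W = "hyperbolic_region A B \<epsilon>"
  have "(\<integral>\<^sup>+t\<in>{0<..}. indicator ?W (s, t) \<partial>lborel) * indicator {0<..} s =
      ennreal (min B (\<epsilon> / s)) * indicator {0<..<A} s" for s
  proof (cases "0 < s \<and> s < A")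
    case True
    then have "indicator ?W (s, t) * indicator {0<..} t = (indicator {0<..<min B (\<epsilon> / s)} t :: ennreal)" for t
      by (auto simp: hyperbolic_region_def indicator_def less_divide_eq mult.commute)
    then show ?thesis
      using True assms by (simp add: emeasure_lborel_Ioo)
  qed (auto simp: hyperbolic_region_def indicator_def)
  then show ?thesis
    using nn_integral_min_const_inverse[OF assms] by simp
qed

lemma distr_minkowski_gauge_pow:
  fixes U :: "'a::euclidean_space set"
  assumes "open U" "balanced U" "U \<noteq> {}" "bounded U"
  shows "distr lborel borel (\<lambda>x. minkowski_gauge U x ^ DIM('a)) =
    density lborel (\<lambda>s. emeasure lborel U * indicator {0<..} s)"
proof (rule distr_eq_density_of_linear_sublevels)
  show "(\<lambda>x. minkowski_gauge U x ^ DIM('a)) \<in> borel_measurable lborel"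
    using borel_measurable_minkowski_gauge[OF assms(1-3)] by measurable
  show "emeasure lborel U < \<infinity>"
    using emeasure_bounded_finite[OF assms(4)] by (simp add: less_top)
qed (simp_all add: minkowski_gauge_nonneg[OF assms(1-3)] emeasure_minkowski_gauge_pow_less[OF assms(1-3)])

lemma minkowski_gauge_less_of_mem_twisted_prod:
  fixes U :: "'a::euclidean_space set" and V :: "'b::euclidean_space set"
  assumes U: "open U" "balanced U" "U \<noteq> {}" and V: "open V" "balanced V" "V \<noteq> {}"
    and "0 < R1" "0 < R2" "0 < \<epsilon>"
    and "(x, y) \<in> twisted_prod U R1 R2 \<epsilon> V"
  shows "minkowski_gauge U x < R1" "minkowski_gauge V y < R2"
    "minkowski_gauge U x ^ DIM('a) * minkowski_gauge V y ^ DIM('b) < \<epsilon>"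
proof -
  obtain u v \<alpha> \<beta> where uv: "x = \<alpha> *\<^sub>R u" "y = \<beta> *\<^sub>R v" "u \<in> U" "v \<in> V"
    and \<alpha>\<beta>: "\<bar>\<alpha>\<bar> \<le> R1" "\<bar>\<beta>\<bar> \<le> R2" "\<bar>\<alpha> ^ DIM('a) * \<beta> ^ DIM('b)\<bar> \<le> \<epsilon>"
    using assms(10) unfolding twisted_prod_def by auto
  show "minkowski_gauge U x < R1" "minkowski_gauge V y < R2"
    using uv \<alpha>\<beta> assms(7,8) by (auto intro: minkowski_gauge_scaleR_less U V)
  show "minkowski_gauge U x ^ DIM('a) * minkowski_gauge V y ^ DIM('b) < \<epsilon>"
  proof (cases "\<alpha> = 0 \<or> \<beta> = 0")
    case True
    then show ?thesis
      using uv minkowski_gauge_zero[OF U] minkowski_gauge_zero[OF V] assms(9) by (auto simp: power_0_left)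
  next
    case False
    have "minkowski_gauge U x < \<bar>\<alpha>\<bar>" "minkowski_gauge V y < \<bar>\<beta>\<bar>"
      using uv False by (auto intro: minkowski_gauge_scaleR_less U V)
    then have "minkowski_gauge U x ^ DIM('a) * minkowski_gauge V y ^ DIM('b) < \<bar>\<alpha>\<bar> ^ DIM('a) * \<bar>\<beta>\<bar> ^ DIM('b)"
      using minkowski_gauge_nonneg[OF U, of x] minkowski_gauge_nonneg[OF V, of y] False
      by (intro mult_strict_mono power_strict_mono) auto
    then show ?thesis using \<alpha>\<beta>(3) by (simp add: abs_mult power_abs)
  qed
qed

lemma mem_twisted_prod_of_minkowski_gauge_less:
  fixes U :: "'a::euclidean_space set" and V :: "'b::euclidean_space set"
  assumes U: "open U" "balanced U" "U \<noteq> {}" and V: "open V" "balanced V" "V \<noteq> {}"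
    and "minkowski_gauge U x < R1" "minkowski_gauge V y < R2"
    and "minkowski_gauge U x ^ DIM('a) * minkowski_gauge V y ^ DIM('b) < \<epsilon>"
  shows "(x, y) \<in> twisted_prod U R1 R2 \<epsilon> V"
proof -
  let ?a = "minkowski_gauge U x" and ?b = "minkowski_gauge V y"
  have "((\<lambda>\<delta>. ?a + \<delta>) \<longlongrightarrow> ?a) (at_right 0)" "((\<lambda>\<delta>. ?b + \<delta>) \<longlongrightarrow> ?b) (at_right 0)"
    "((\<lambda>\<delta>. (?a + \<delta>) ^ DIM('a) * (?b + \<delta>) ^ DIM('b)) \<longlongrightarrow> ?a ^ DIM('a) * ?b ^ DIM('b)) (at_right 0)"
    by (auto intro!: tendsto_eq_intros)
  then have "\<forall>\<^sub>F \<delta> in at_right 0. 0 < \<delta> \<and> ?a + \<delta> < R1 \<and> ?b + \<delta> < R2 \<and>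
      (?a + \<delta>) ^ DIM('a) * (?b + \<delta>) ^ DIM('b) < \<epsilon>"
    using assms(7-9) by (intro eventually_conj eventually_at_right_less) (auto elim: order_tendstoD(2))
  then obtain \<delta> where \<delta>: "0 < \<delta>" "?a + \<delta> < R1" "?b + \<delta> < R2"
    "(?a + \<delta>) ^ DIM('a) * (?b + \<delta>) ^ DIM('b) < \<epsilon>"
    using eventually_happens'[OF trivial_limit_at_right_real] by blast
  have \<alpha>: "0 < ?a + \<delta>" and \<beta>: "0 < ?b + \<delta>"
    using \<delta>(1) minkowski_gauge_nonneg[OF U, of x] minkowski_gauge_nonneg[OF V, of y] by auto
  have "x \<in> (*\<^sub>R) (?a + \<delta>) ` U" "y \<in> (*\<^sub>R) (?b + \<delta>) ` V"
    using minkowski_gauge_less_iff[OF U \<alpha>, of x] minkowski_gauge_less_iff[OF V \<beta>, of y] \<delta>(1) by auto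
  then obtain u v where "u \<in> U" "x = (?a + \<delta>) *\<^sub>R u" "v \<in> V" "y = (?b + \<delta>) *\<^sub>R v"
    by blast
  then show ?thesis
    using \<alpha> \<beta> \<delta> unfolding twisted_prod_def
    by (intro CollectI exI[of _ u] exI[of _ v] exI[of _ "?a + \<delta>"] exI[of _ "?b + \<delta>"]) simp
qed

lemma twisted_prod_eq_vimage_hyperbolic_region:
  fixes U :: "'a::euclidean_space set" and V :: "'b::euclidean_space set"
  assumes U: "open U" "balanced U" "U \<noteq> {}" and V: "open V" "balanced V" "V \<noteq> {}"
    and "0 < R1" "0 < R2" "0 < \<epsilon>"
  shows "twisted_prod U R1 R2 \<epsilon> V = {z. (minkowski_gauge U (fst z) ^ DIM('a), minkowski_gauge V (snd z) ^ DIM('b))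
    \<in> hyperbolic_region (R1 ^ DIM('a)) (R2 ^ DIM('b)) \<epsilon>}"
proof -
  have "minkowski_gauge U x < R1 \<longleftrightarrow> minkowski_gauge U x ^ DIM('a) < R1 ^ DIM('a)"
    and "minkowski_gauge V y < R2 \<longleftrightarrow> minkowski_gauge V y ^ DIM('b) < R2 ^ DIM('b)" for x y
    using power_less_power_iff[OF minkowski_gauge_nonneg[OF U]] power_less_power_iff[OF minkowski_gauge_nonneg[OF V]]
      assms(7,8) by simp_all
  moreover have "(x, y) \<in> twisted_prod U R1 R2 \<epsilon> V \<longleftrightarrow> minkowski_gauge U x < R1 \<and> minkowski_gauge V y < R2 \<and>
      minkowski_gauge U x ^ DIM('a) * minkowski_gauge V y ^ DIM('b) < \<epsilon>" for x y
    using minkowski_gauge_less_of_mem_twisted_prod[OF U V assms(7-9)]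
      mem_twisted_prod_of_minkowski_gauge_less[OF U V] by blast
  ultimately show ?thesis by (force simp: hyperbolic_region_def)
qed

theorem mainTheorem6:
  fixes U :: "'a::euclidean_space set" and V :: "'b::euclidean_space set"
    and R1 R2 \<epsilon> :: real
  assumes "open U" "compact (closure U)" "balanced U"
    and "open V" "compact (closure V)" "balanced V"
    and "R1 > 0" "R2 > 0" "0 < \<epsilon>" "\<epsilon> < R1 ^ DIM('a) * R2 ^ DIM('b)"
  shows "emeasure lborel (twisted_prod U R1 R2 \<epsilon> V) =
    ennreal (\<epsilon> * (1 + ln (R1 ^ DIM('a) * R2 ^ DIM('b) / \<epsilon>))) * emeasure lborel U * emeasure lborel V"
proof (cases "U = {} \<or> V = {}")
  case True
  then show ?thesis unfolding twisted_prod_def by auto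
next
  case False
  then have U: "open U" "balanced U" "U \<noteq> {}" and V: "open V" "balanced V" "V \<noteq> {}"
    using assms by auto
  have "bounded U" "bounded V"
    using assms(2,5) by (meson bounded_subset closure_subset compact_imp_bounded)+
  then have "emeasure lborel (twisted_prod U R1 R2 \<epsilon> V) = emeasure lborel U * emeasure lborel V *
      (\<integral>\<^sup>+s\<in>{0<..}. (\<integral>\<^sup>+t\<in>{0<..}. indicator (hyperbolic_region (R1 ^ DIM('a)) (R2 ^ DIM('b)) \<epsilon>) (s, t)
        \<partial>lborel) \<partial>lborel)"
    unfolding twisted_prod_eq_vimage_hyperbolic_region[OF U V assms(7-9)]
    using borel_measurable_minkowski_gauge[OF U] borel_measurable_minkowski_gauge[OF V]
    by (intro emeasure_lborel_pair_vimage distr_minkowski_gauge_pow hyperbolic_region_sets U V) auto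
  also have "\<dots> = emeasure lborel U * emeasure lborel V * ennreal (\<epsilon> * (1 + ln (R1 ^ DIM('a) * R2 ^ DIM('b) / \<epsilon>)))"
    using assms(8-10) by (simp add: nn_integral_hyperbolic_region)
  finally show ?thesis by (simp add: ac_simps)
qed

end
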